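(* Let $k$, $d$ and $n$ be positive integers such that $k$ is even, $d \ge 2$, and $n \ge \max\{k, \frac{d+1}{8}(k^2-2sk+4s-4) + 1\}$, where $s \in \{0,1\}$ with $s \equiv \frac{k-2}{2} \pmod 2$. Then, for any function $f:[n] \rightarrow \{-1,1\}$ such that $|f([n])| \le \min \{n-k,\frac{d-1}{d+1}n\}$, there is a zero-sum $(d,k)$-block in $[n]$, i.e. a $(d,k)$-block $A\subseteq[n]$ with $f(A)=0$.
   Context: $[n]=\{1,\dots,n\}$; $f(Y)=\sum_{y\in Y}f(y)$. A $(d,k)$-block in $[n]$ is a set $\{a_1,\dots,a_k\}\subseteq[n]$ of integers with $a_1<a_2<\dots<a_k$ and $a_{i+1}-a_i\le d$ for all $1\le i\le k-1$. *)

theory Defs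
  imports Complex_Main
begin

definition dk_block :: "nat \<Rightarrow> nat \<Rightarrow> nat \<Rightarrow> nat set \<Rightarrow> bool" where
  "dk_block d k n A \<longleftrightarrow> A \<subseteq> {1..n} \<and>
     (\<exists>a :: nat \<Rightarrow> nat. A = a ` {..<k} \<and>
        (\<forall>i. Suc i < k \<longrightarrow> a i < a (Suc i) \<and> a (Suc i) - a i \<le> d))"

end

theory Submission
  imports Defs
begin

text \<open>
  Write \<open>k = 2m\<close>. A \<open>k\<close>-element subset of \<open>[n]\<close> is a \<open>(d,k)\<close>-block exactly when its
  consecutive elements are at most \<open>d\<close> apart. Suppose no block has zero sum. Every block
  other than \<open>{1..k}\<close> can be turned into a block with smaller element sum by replacing its
  maximum with a smaller point; this changes \<open>f(A)\<close>, which is even and nonzero, by at most 2,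
  so all blocks have the sign of \<open>f({1..k})\<close>, say positive.
  The balance hypothesis forces at least \<open>n/(d+1)\<close> points with value \<open>-1\<close>, and the bound on
  \<open>n\<close> makes their number \<open>M\<close> exceed \<open>\<lceil>m/2\<rceil>(m-1)\<close>. Bridging the gap between consecutive
  \<open>-1\<close>-points costs \<open>\<lfloor>(gap-1)/d\<rfloor>\<close> extra points, at most \<open>M\<close> in total, so by averaging some
  \<open>m\<close> consecutive \<open>-1\<close>-points are bridged by at most \<open>m\<close> extra points. Padding this chain to
  \<open>k\<close> points yields a block with at least \<open>m\<close> entries \<open>-1\<close>, hence \<open>f(A) \<le> 0\<close>: a contradiction.
\<close>

definition gaps_le :: "nat \<Rightarrow> nat set \<Rightarrow> bool" where
  "gaps_le d C \<longleftrightarrow> (\<forall>x\<in>C. \<forall>w\<in>C. x < w \<longrightarrow> (\<exists>y\<in>C. x < y \<and> y \<le> w \<and> y \<le> x + d))"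

lemma gaps_le_imp_dk_block:
  assumes "A \<subseteq> {1..n}" "card A = k" "gaps_le d A"
  shows "dk_block d k n A"
proof -
  have "finite A" using assms(1) finite_subset by blast
  define xs where "xs = sorted_list_of_set A"
  have sorted: "sorted_wrt (<) xs" unfolding xs_def by simp
  have len: "length xs = k" unfolding xs_def using assms by simp
  have "set xs = A" unfolding xs_def using \<open>finite A\<close> by simp
  then have img: "A = (!) xs ` {..<k}" using len by (auto simp: set_conv_nth)
  have less_iff: "i < k \<Longrightarrow> j < k \<Longrightarrow> xs ! i < xs ! j \<longleftrightarrow> i < j" for i j
    using sorted_wrt_nth_less[OF sorted] len by (metis less_asym linorder_neqE_nat)
  have "xs ! i < xs ! Suc i \<and> xs ! Suc i - xs ! i \<le> d" if i: "Suc i < k" for i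
  proof -
    have lt: "xs ! i < xs ! Suc i" using less_iff i by simp
    have "xs ! i \<in> A" "xs ! Suc i \<in> A" using img i by auto
    then obtain y where y: "y \<in> A" "xs ! i < y" "y \<le> xs ! Suc i" "y \<le> xs ! i + d"
      using assms(3) lt unfolding gaps_le_def by blast
    then obtain j where j: "j < k" "y = xs ! j" using img by auto
    have "\<not> (i < j \<and> j < Suc i)" by linarith
    then have "y = xs ! Suc i" using y j i less_iff[of i j] less_iff[of j "Suc i"] by force
    then show ?thesis using lt y by auto
  qed
  then show ?thesis unfolding dk_block_def using assms(1) img by blast
qed

lemma gaps_le_atLeastAtMost: "d \<ge> 1 \<Longrightarrow> gaps_le d {a..b}"
  unfolding gaps_le_def by (auto intro!: bexI[of _ "Suc _"])

lemma gaps_le_restrict: "gaps_le d C \<Longrightarrow> gaps_le d {x\<in>C. x \<le> b}"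
  unfolding gaps_le_def by (metis (no_types, lifting) mem_Collect_eq order.trans)

lemma gaps_le_insert_Suc:
  assumes "gaps_le d C" "d \<ge> 1" "z \<in> C" "Suc z \<notin> C"
  shows "gaps_le d (insert (Suc z) C)"
  unfolding gaps_le_def
proof (intro ballI impI)
  fix x w assume x: "x \<in> insert (Suc z) C" and w: "w \<in> insert (Suc z) C" and "x < w"
  show "\<exists>y\<in>insert (Suc z) C. x < y \<and> y \<le> w \<and> y \<le> x + d"
  proof (cases "x = Suc z")
    case True
    then have "w \<in> C" "z < w" using w \<open>x < w\<close> by auto
    then obtain y where y: "y \<in> C" "z < y" "y \<le> w" "y \<le> z + d"
      using assms(1,3) unfolding gaps_le_def by blast
    then have "Suc z < y" using assms(4) by (metis Suc_lessI)
    then show ?thesis using y True by (intro bexI[of _ y]) auto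
  next
    case False
    then have "x \<in> C" using x by auto
    show ?thesis
    proof (cases "w \<in> C")
      case True
      then show ?thesis using assms(1) \<open>x \<in> C\<close> \<open>x < w\<close> unfolding gaps_le_def by blast
    next
      case False
      then have "w = Suc z" using w by auto
      show ?thesis
      proof (cases "x = z")
        case True
        then show ?thesis using \<open>w = Suc z\<close> assms(2) by auto
      next
        case False
        then have "x < z" using \<open>x < w\<close> \<open>w = Suc z\<close> by auto
        then obtain y where "y \<in> C" "x < y" "y \<le> z" "y \<le> x + d"
          using assms(1,3) \<open>x \<in> C\<close> unfolding gaps_le_def by blast
        then show ?thesis using \<open>w = Suc z\<close> by auto
      qed
    qed
  qed
qed

lemma gaps_le_insert_below:
  assumes "gaps_le d C" "d \<ge> 1" "\<forall>c\<in>C. a < c" "Suc a \<in> C"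
  shows "gaps_le d (insert a C)"
  unfolding gaps_le_def
proof (intro ballI impI)
  fix x w assume x: "x \<in> insert a C" and w: "w \<in> insert a C" and "x < w"
  show "\<exists>y\<in>insert a C. x < y \<and> y \<le> w \<and> y \<le> x + d"
  proof (cases "x = a")
    case True
    then have "Suc a \<le> w" using w \<open>x < w\<close> assms(3) by fastforce
    then show ?thesis using True assms(2,4) by (intro bexI[of _ "Suc a"]) auto
  next
    case False
    then have "x \<in> C" "w \<in> C" using x w \<open>x < w\<close> assms(3) by auto
    then show ?thesis using assms(1) \<open>x < w\<close> unfolding gaps_le_def by blast
  qed
qed

lemma gaps_le_Un:
  assumes "gaps_le d C1" "gaps_le d C2" "b \<in> C1" "b \<in> C2" "\<forall>x\<in>C1. x \<le> b" "\<forall>x\<in>C2. b \<le> x"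
  shows "gaps_le d (C1 \<union> C2)"
  unfolding gaps_le_def
proof (intro ballI impI)
  fix x w assume x: "x \<in> C1 \<union> C2" and w: "w \<in> C1 \<union> C2" and "x < w"
  show "\<exists>y\<in>C1 \<union> C2. x < y \<and> y \<le> w \<and> y \<le> x + d"
  proof (cases "x \<in> C2")
    case True
    then have "w \<in> C2" using w \<open>x < w\<close> assms(5,6) by force
    then show ?thesis using assms(2) True \<open>x < w\<close> unfolding gaps_le_def by blast
  next
    case False
    then have "x \<in> C1" "x < b" using x assms(3-5) by (auto simp: order.order_iff_strict)
    show ?thesis
    proof (cases "w \<in> C1")
      case True
      then show ?thesis using assms(1) \<open>x \<in> C1\<close> \<open>x < w\<close> unfolding gaps_le_def by blast
    next
      case False
      then have "b \<le> w" using w assms(6) by auto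
      obtain y where "y \<in> C1" "x < y" "y \<le> b" "y \<le> x + d"
        using assms(1,3) \<open>x \<in> C1\<close> \<open>x < b\<close> unfolding gaps_le_def by blast
      then show ?thesis using \<open>b \<le> w\<close> by auto
    qed
  qed
qed

lemma atLeastAtMost_subset_if_Suc_closed:
  assumes "a \<in> A" "\<forall>z\<in>A. z < b \<longrightarrow> Suc z \<in> A"
  shows "{a..b} \<subseteq> A"
proof
  fix x assume "x \<in> {a..b}"
  then have "a \<le> x" "x \<le> b" by auto
  then show "x \<in> A"
  proof (induction x rule: dec_induct)
    case base show ?case by (rule assms(1))
  next
    case (step x) then show ?case using assms(2) by simp
  qed
qed

lemma gaps_le_extend:
  assumes "gaps_le d C" "d \<ge> 1" "C \<subseteq> {1..b}" "C \<noteq> {}" "C \<noteq> {1..b}"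
  shows "\<exists>y\<in>{1..b} - C. gaps_le d (insert y C)"
proof (cases "\<exists>z\<in>C. z < b \<and> Suc z \<notin> C")
  case True
  then obtain z where "z \<in> C" "z < b" "Suc z \<notin> C" by blast
  then show ?thesis using assms(1-3) gaps_le_insert_Suc by fastforce
next
  case False
  have "finite C" using assms(3) finite_subset by blast
  define a where "a = Min C"
  have "a \<in> C" "\<forall>c\<in>C. a \<le> c" unfolding a_def using \<open>finite C\<close> assms(4) by auto
  moreover have "{a..b} \<subseteq> C"
    using atLeastAtMost_subset_if_Suc_closed[OF \<open>a \<in> C\<close>] False by blast
  ultimately have "C = {a..b}" using assms(3) by fastforce
  then have "a \<ge> 2" using assms(3,5) \<open>a \<in> C\<close> by (cases "a = 1") auto
  then have "a - 1 \<in> {1..b} - C" "Suc (a - 1) \<in> C"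
    using \<open>C = {a..b}\<close> \<open>a \<in> C\<close> assms(3) by auto
  moreover have "\<forall>c\<in>C. a - 1 < c" using \<open>C = {a..b}\<close> \<open>a \<ge> 2\<close> by auto
  ultimately show ?thesis using gaps_le_insert_below[OF assms(1,2)] by blast
qed

lemma gaps_le_superset_card:
  assumes "gaps_le d C" "d \<ge> 1" "C \<subseteq> {1..n}" "C \<noteq> {}" "card C \<le> k" "k \<le> n"
  shows "\<exists>A. C \<subseteq> A \<and> A \<subseteq> {1..n} \<and> card A = k \<and> gaps_le d A"
  using assms
proof (induction "k - card C" arbitrary: C)
  case 0
  then show ?case by (intro exI[of _ C]) auto
next
  case (Suc j)
  have "card C < card {1..n}" using Suc.hyps(2) Suc.prems(6) by simp
  then have "C \<noteq> {1..n}" by blast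
  then obtain y where y: "y \<in> {1..n} - C" "gaps_le d (insert y C)"
    using gaps_le_extend Suc.prems(1-4) by blast
  have "finite C" using Suc.prems(3) finite_subset by blast
  then have "card (insert y C) = Suc (card C)" using y(1) by simp
  then have "\<exists>A. insert y C \<subseteq> A \<and> A \<subseteq> {1..n} \<and> card A = k \<and> gaps_le d A"
    using Suc.hyps Suc.prems y by (intro Suc.hyps(1)) auto
  then show ?case by blast
qed

lemma sum_plus_minus_one:
  fixes g :: "'a \<Rightarrow> int"
  assumes "finite A" "\<forall>x\<in>A. g x = 1 \<or> g x = -1"
  shows "sum g A = int (card A) - 2 * int (card {x\<in>A. g x = -1})"
  using assms
proof (induction A rule: finite_induct)
  case empty then show ?case by simp
next
  case (insert x F)
  have "{y\<in>insert x F. g y = -1} =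
      (if g x = -1 then insert x {y\<in>F. g y = -1} else {y\<in>F. g y = -1})"
    by auto
  then show ?case using insert by (auto split: if_splits)
qed

lemma even_pos_if_close_to_even_pos:
  fixes a b :: int
  assumes "even a" "even b" "a \<noteq> 0" "0 < b" "\<bar>a - b\<bar> \<le> 2"
  shows "0 < a"
  using assms by (auto elim!: evenE)

lemma exists_replacement_below_Max:
  assumes "gaps_le d A" "d \<ge> 1" "A \<subseteq> {1..n}" "card A \<ge> 2" "A \<noteq> {1..card A}"
  shows "\<exists>y\<in>{1..<Max A} - A. gaps_le d (insert y (A - {Max A}))"
proof -
  define M where "M = Max A"
  define C where "C = A - {M}"
  have "finite A" using assms(3) finite_subset by blast
  moreover have "A \<noteq> {}" using assms(4) by auto
  ultimately have "M \<in> A" "\<forall>x\<in>A. x \<le> M" unfolding M_def by auto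
  then have "C = {x\<in>A. x \<le> M - 1}" unfolding C_def using assms(3) by force
  then have "gaps_le d C" using gaps_le_restrict[OF assms(1)] by simp
  have "card C = card A - 1" unfolding C_def using \<open>finite A\<close> \<open>M \<in> A\<close> by simp
  then have "C \<noteq> {}" using assms(4) by auto
  have "C \<subseteq> {1..M - 1}" using \<open>C = {x\<in>A. x \<le> M - 1}\<close> assms(3) by auto
  have "C \<noteq> {1..M - 1}"
  proof
    assume "C = {1..M - 1}"
    have "A = {1..M}"
    proof
      show "A \<subseteq> {1..M}" using \<open>\<forall>x\<in>A. x \<le> M\<close> assms(3) by auto
      show "{1..M} \<subseteq> A"
      proof
        fix x assume "x \<in> {1..M}"
        then have "x = M \<or> x \<in> {1..M - 1}" by auto
        then show "x \<in> A" using \<open>C = {1..M - 1}\<close> \<open>M \<in> A\<close> unfolding C_def by blast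
      qed
    qed
    then show False using assms(5) by simp
  qed
  then obtain y where "y \<in> {1..M - 1} - C" "gaps_le d (insert y C)"
    using gaps_le_extend[OF \<open>gaps_le d C\<close> assms(2) \<open>C \<subseteq> {1..M - 1}\<close> \<open>C \<noteq> {}\<close>] by blast
  moreover from this have "y \<in> {1..<M} - A" using \<open>M \<in> A\<close> assms(3) unfolding C_def by auto
  ultimately show ?thesis unfolding M_def C_def by blast
qed

lemma sum_pos_if_no_zero_sum:
  fixes g :: "nat \<Rightarrow> int"
  assumes "d \<ge> 1" "even k"
    and pm: "\<forall>x\<in>{1..n}. g x = 1 \<or> g x = -1"
    and no_zero: "\<forall>A. A \<subseteq> {1..n} \<and> card A = k \<and> gaps_le d A \<longrightarrow> sum g A \<noteq> 0"
    and base: "0 < sum g {1..k}"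
  shows "A \<subseteq> {1..n} \<Longrightarrow> card A = k \<Longrightarrow> gaps_le d A \<Longrightarrow> 0 < sum g A"
proof (induction "\<Sum>A" arbitrary: A rule: less_induct)
  case less
  have "k \<ge> 2" using base \<open>even k\<close> by (cases "k = 0") auto
  have "finite A" using less.prems(1) finite_subset by blast
  have even_sum: "even (sum g B)" if "B \<subseteq> {1..n}" "card B = k" for B
  proof -
    have "sum g B = int k - 2 * int (card {x\<in>B. g x = -1})"
      using sum_plus_minus_one[of B g] that pm finite_subset[OF that(1)] by auto
    then show ?thesis using \<open>even k\<close> by simp
  qed
  show ?case
  proof (cases "A = {1..k}")
    case True
    then show ?thesis using base by simp
  next
    case False
    define M where "M = Max A"
    have "A \<noteq> {}" using less.prems(2) \<open>k \<ge> 2\<close> by auto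
    then have "M \<in> A" unfolding M_def using \<open>finite A\<close> by simp
    have "card A \<ge> 2" "A \<noteq> {1..card A}" using less.prems(2) \<open>k \<ge> 2\<close> False by simp_all
    then obtain y where y: "y \<in> {1..<M} - A" "gaps_le d (insert y (A - {M}))"
      using exists_replacement_below_Max[OF less.prems(3) assms(1) less.prems(1)] unfolding M_def by blast
    let ?A = "insert y (A - {M})"
    have sub: "?A \<subseteq> {1..n}" using y(1) \<open>M \<in> A\<close> less.prems(1) by auto
    have card: "card ?A = k" using less.prems(2) \<open>k \<ge> 2\<close> y(1) \<open>M \<in> A\<close> \<open>finite A\<close> by simp
    have "\<Sum>?A < \<Sum>A"
      using y(1) \<open>M \<in> A\<close> \<open>finite A\<close> sum.remove[of A M id] by simp
    then have "0 < sum g ?A" using less.hyps sub card y(2) by blast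
    moreover have "sum g ?A = sum g A - g M + g y"
      using y(1) \<open>M \<in> A\<close> \<open>finite A\<close> by (simp add: sum_diff1)
    moreover have "M \<in> {1..n}" "y \<in> {1..n}" using sub \<open>M \<in> A\<close> less.prems(1) by auto
    then have "g y \<in> {-1, 1}" "g M \<in> {-1, 1}" using pm by blast+
    then have "\<bar>g y - g M\<bar> \<le> 2" by auto
    moreover have "sum g A \<noteq> 0" using no_zero less.prems by blast
    moreover have "even (sum g A)" "even (sum g ?A)" using even_sum less.prems(1,2) sub card by auto
    ultimately show ?thesis using even_pos_if_close_to_even_pos[of "sum g A" "sum g ?A"] by simp
  qed
qed

lemma gaps_le_progression_to:
  assumes "a + d * c < e" "e \<le> a + d * Suc c"
  shows "gaps_le d ((\<lambda>t. a + d * t) ` {..c} \<union> {e})"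
  unfolding gaps_le_def
proof (intro ballI impI)
  let ?P = "(\<lambda>t. a + d * t) ` {..c}"
  fix x w assume x: "x \<in> ?P \<union> {e}" and w: "w \<in> ?P \<union> {e}" and "x < w"
  have below_e: "t \<le> c \<Longrightarrow> a + d * t < e" for t
    using assms(1) by (meson add_le_cancel_left mult_le_mono2 order.strict_trans1)
  have "x \<noteq> e"
  proof
    assume "x = e"
    then obtain t' where "t' \<le> c" "w = a + d * t'" using w \<open>x < w\<close> by auto
    then show False using below_e[of t'] \<open>x < w\<close> \<open>x = e\<close> by simp
  qed
  then obtain t where t: "t \<le> c" "x = a + d * t" using x by auto
  show "\<exists>y\<in>?P \<union> {e}. x < y \<and> y \<le> w \<and> y \<le> x + d"
  proof (cases "t < c")
    case True
    have "d > 0" using assms by (cases "d = 0") auto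
    have "a + d * Suc t \<le> w"
    proof (cases "w = e")
      case True
      then show ?thesis using below_e[of "Suc t"] \<open>t < c\<close> by simp
    next
      case False
      then obtain t' where "w = a + d * t'" using w by auto
      then have "t < t'" using \<open>x < w\<close> t by simp
      then show ?thesis using \<open>w = a + d * t'\<close> mult_le_mono2[of "Suc t" t' d] by simp
    qed
    moreover have "a + d * Suc t \<in> ?P" by (rule rev_image_eqI[of "Suc t"]) (use True in auto)
    ultimately show ?thesis using t \<open>d > 0\<close> by (intro bexI[of _ "a + d * Suc t"]) auto
  next
    case False
    then have "t = c" using t by simp
    then have "w = e" using w \<open>x < w\<close> t by auto
    then show ?thesis using assms \<open>t = c\<close> t \<open>x < w\<close> by auto
  qed
qed

lemma gaps_le_bridge:
  fixes p c :: "nat \<Rightarrow> nat"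
  assumes "\<forall>i<L. p i + d * c i < p (Suc i) \<and> p (Suc i) \<le> p i + d * Suc (c i)"
  shows "\<exists>C. gaps_le d C \<and> p ` {..L} \<subseteq> C \<and> C \<subseteq> {p 0..p L} \<and> card C \<le> Suc L + (\<Sum>i<L. c i)"
  using assms
proof (induction L)
  case 0
  show ?case by (intro exI[of _ "{p 0}"]) (auto simp: gaps_le_def)
next
  case (Suc L)
  then obtain C where C: "gaps_le d C" "p ` {..L} \<subseteq> C" "C \<subseteq> {p 0..p L}"
    "card C \<le> Suc L + (\<Sum>i<L. c i)"
    by auto
  have step: "p L + d * c L < p (Suc L)" "p (Suc L) \<le> p L + d * Suc (c L)"
    using Suc.prems by auto
  define S where "S = (\<lambda>t. p L + d * t) ` {..c L} \<union> {p (Suc L)}"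
  have "p L \<in> S" unfolding S_def by (auto intro: image_eqI[of _ _ 0])
  have below: "t \<le> c L \<Longrightarrow> p L + d * t < p (Suc L)" for t
    using step(1) by (meson add_le_cancel_left mult_le_mono2 order.strict_trans1)
  have S_between: "S \<subseteq> {p L..p (Suc L)}"
    unfolding S_def using below[THEN less_imp_le] below[of 0] by auto
  have "p L \<in> C" using C(2) by auto
  have "gaps_le d S" unfolding S_def by (rule gaps_le_progression_to[OF step])
  then have "gaps_le d (C \<union> S)"
    using C(3) S_between by (intro gaps_le_Un[OF C(1) _ \<open>p L \<in> C\<close> \<open>p L \<in> S\<close>]) auto
  moreover have "p ` {..Suc L} \<subseteq> C \<union> S" using C(2) unfolding S_def by (auto simp: atMost_Suc)
  moreover have "C \<union> S \<subseteq> {p 0..p (Suc L)}"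
  proof -
    have "p 0 \<le> p L" "p L \<le> p (Suc L)" using C(3) S_between \<open>p L \<in> C\<close> \<open>p L \<in> S\<close> by auto
    then have "{p 0..p L} \<union> {p L..p (Suc L)} \<subseteq> {p 0..p (Suc L)}" by auto
    then show ?thesis using C(3) S_between by blast
  qed
  moreover have "card (C \<union> S) \<le> Suc (Suc L) + (\<Sum>i<Suc L. c i)"
  proof -
    have "card ((\<lambda>t. p L + d * t) ` {..c L}) \<le> Suc (c L)"
      using card_image_le[of "{..c L}"] by simp
    moreover have "card S \<le> card ((\<lambda>t. p L + d * t) ` {..c L}) + card {p (Suc L)}"
      unfolding S_def by (rule card_Un_le)
    ultimately have "card S \<le> Suc (Suc (c L))" by simp
    moreover have "finite S" unfolding S_def by simp
    ultimately have "card (S - {p L}) \<le> Suc (c L)" using \<open>p L \<in> S\<close> by (simp add: card_Diff_singleton)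
    moreover have "C \<union> S = C \<union> (S - {p L})" using \<open>p L \<in> C\<close> by blast
    ultimately show ?thesis using C(4) card_Un_le[of C "S - {p L}"] by simp
  qed
  ultimately show ?case by blast
qed

lemma telescoping_gaps:
  fixes p c :: "nat \<Rightarrow> nat"
  assumes "\<forall>i<L. p i + d * c i < p (Suc i)"
  shows "p 0 + d * (\<Sum>i<L. c i) + L \<le> p L"
  using assms
proof (induction L)
  case (Suc L)
  then have "p 0 + d * (\<Sum>i<L. c i) + L \<le> p L" "p L + d * c L < p (Suc L)" by auto
  then show ?case by (simp add: algebra_simps)
qed simp

lemma exists_window_sum_le:
  fixes c :: "nat \<Rightarrow> nat"
  assumes "T * w \<le> L" "(\<Sum>i<L. c i) < T * Suc B"
  shows "\<exists>j. j + w \<le> L \<and> (\<Sum>i<w. c (j + i)) \<le> B"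
proof (rule ccontr)
  assume none: "\<not> ?thesis"
  have "B < (\<Sum>i<w. c (t * w + i))" if "t < T" for t
  proof -
    have "t * w + w \<le> T * w" using that by (metis add.commute mult_Suc mult_le_mono1 Suc_leI)
    then have "t * w + w \<le> L" using assms(1) by linarith
    then have "\<not> (\<Sum>i<w. c (t * w + i)) \<le> B" using none by blast
    then show ?thesis by simp
  qed
  then have "T * Suc B \<le> (\<Sum>t<T. \<Sum>i<w. c (t * w + i))"
    using sum_mono[of "{..<T}" "\<lambda>_. Suc B"] by (simp add: Suc_le_eq)
  also have "\<dots> = (\<Sum>t<T. \<Sum>i\<in>{t * w..<t * w + w}. c i)"
    by (simp add: sum.atLeastLessThan_shift_0 atLeast0LessThan comp_def)
  also have "\<dots> = (\<Sum>i<T * w. c i)" by (rule sum.nat_group)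
  also have "\<dots> \<le> (\<Sum>i<L. c i)" using assms(1) by (intro sum_mono2) auto
  finally show False using assms(2) by simp
qed

lemma exists_window_count:
  assumes "m \<ge> 1" "(m + 1) div 2 * (m - 1) < M"
  shows "\<exists>T. T * (m - 1) \<le> M - 1 \<and> M < T * Suc m"
proof (cases "m = 1")
  case True
  then show ?thesis using assms(2) by (intro exI[of _ M]) simp
next
  case False
  define T where "T = (M - 1) div (m - 1)"
  have "(m + 1) div 2 \<le> T"
    unfolding T_def using div_le_mono[of "(m + 1) div 2 * (m - 1)" "M - 1" "m - 1"] assms False by simp
  then have "m \<le> 2 * T" by linarith
  moreover have "M - 1 < T * (m - 1) + (m - 1)"
    unfolding T_def using False assms(1) div_mult_mod_eq[of "M - 1" "m - 1"]
      mod_less_divisor[of "m - 1" "M - 1"] by linarith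
  moreover have "T * Suc m = T * (m - 1) + 2 * T"
  proof -
    have "Suc m = (m - 1) + 2" using assms(1) by simp
    then show ?thesis by (simp only: add_mult_distrib2 mult.commute)
  qed
  moreover have "T * (m - 1) \<le> M - 1" unfolding T_def by (rule div_times_less_eq_dividend)
  moreover have "M \<ge> 1" using assms(2) by simp
  ultimately show ?thesis by (intro exI[of _ T]) linarith
qed

lemma div_gap_bounds:
  fixes a e d :: nat
  assumes "a < e" "d \<ge> 1"
  shows "a + d * ((e - a - 1) div d) < e" "e \<le> a + d * Suc ((e - a - 1) div d)"
proof -
  let ?G = "e - a - 1"
  have "d * (?G div d) \<le> ?G" by simp
  then show "a + d * (?G div d) < e" using assms(1) by linarith
  have "d * (?G div d) + ?G mod d = ?G" by (rule mult_div_mod_eq)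
  moreover have "?G mod d < d" using assms(2) by simp
  moreover have "d * Suc (?G div d) = d * (?G div d) + d" by simp
  ultimately show "e \<le> a + d * Suc (?G div d)" using assms(1) by linarith
qed

lemma obtain_strict_enumeration:
  fixes N :: "nat set"
  assumes "finite N"
  obtains p where "\<And>i j. i < j \<Longrightarrow> j < card N \<Longrightarrow> p i < p j" "p ` {..<card N} = N"
proof
  define xs where "xs = sorted_list_of_set N"
  have "length xs = card N" "set xs = N" unfolding xs_def using assms by simp_all
  then show "(!) xs ` {..<card N} = N" by (auto simp: set_conv_nth)
  show "xs ! i < xs ! j" if "i < j" "j < card N" for i j
    using that sorted_wrt_nth_less[of "(<)" xs i j] \<open>length xs = card N\<close> unfolding xs_def by simp
qed

lemma exists_short_block_through_points:
  fixes p :: "nat \<Rightarrow> nat"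
  assumes "d \<ge> 1" "m \<ge> 1" "(m + 1) div 2 * (m - 1) < M" "n \<le> M * (d + 1)"
    and increasing: "\<And>i. Suc i < M \<Longrightarrow> p i < p (Suc i)"
    and points: "\<And>i. i < M \<Longrightarrow> p i \<in> {1..n}"
  shows "\<exists>C j. gaps_le d C \<and> C \<subseteq> {1..n} \<and> card C \<le> 2 * m \<and> j + m \<le> M \<and>
    (\<lambda>i. p (j + i)) ` {..m - 1} \<subseteq> C"
proof -
  define c where "c i = (p (Suc i) - p i - 1) div d" for i
  have bracket: "p i + d * c i < p (Suc i) \<and> p (Suc i) \<le> p i + d * Suc (c i)" if "Suc i < M" for i
    unfolding c_def using div_gap_bounds[OF increasing[OF that] assms(1)] by simp
  have "M \<ge> 1" using assms(3) by simp
  have "p 0 + d * (\<Sum>i<M - 1. c i) + (M - 1) \<le> p (M - 1)"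
    using bracket by (intro telescoping_gaps) simp
  moreover have "1 \<le> p 0" "p (M - 1) \<le> n" using points \<open>M \<ge> 1\<close> by auto
  ultimately have "d * (\<Sum>i<M - 1. c i) + M \<le> M * (d + 1)" using assms(4) \<open>M \<ge> 1\<close> by linarith
  then have "d * (\<Sum>i<M - 1. c i) \<le> d * M" by (simp add: algebra_simps)
  then have total: "(\<Sum>i<M - 1. c i) \<le> M" using assms(1) by simp
  obtain T where T: "T * (m - 1) \<le> M - 1" "M < T * Suc m"
    using exists_window_count[OF assms(2,3)] by blast
  obtain j where j: "j + (m - 1) \<le> M - 1" "(\<Sum>i<m - 1. c (j + i)) \<le> m"
    using exists_window_sum_le[OF T(1), of c m] total T(2) by auto
  obtain C where C: "gaps_le d C" "(\<lambda>i. p (j + i)) ` {..m - 1} \<subseteq> C"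
    "C \<subseteq> {p j..p (j + (m - 1))}" "card C \<le> Suc (m - 1) + (\<Sum>i<m - 1. c (j + i))"
    using gaps_le_bridge[of "m - 1" "\<lambda>i. p (j + i)" d "\<lambda>i. c (j + i)"] bracket j(1) \<open>M \<ge> 1\<close>
    by fastforce
  have "{p j..p (j + (m - 1))} \<subseteq> {1..n}" using points[of j] points[of "j + (m - 1)"] j(1) \<open>M \<ge> 1\<close> by auto
  moreover have "card C \<le> 2 * m" using C(4) j(2) assms(2) by simp
  moreover have "j + m \<le> M" using j(1) assms(2) \<open>M \<ge> 1\<close> by simp
  ultimately show ?thesis using C by blast
qed

lemma exists_block_dense_in:
  assumes "d \<ge> 1" "m \<ge> 1" "2 * m \<le> n" "N \<subseteq> {1..n}" "n \<le> card N * (d + 1)"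
    "(m + 1) div 2 * (m - 1) < card N"
  shows "\<exists>A. A \<subseteq> {1..n} \<and> card A = 2 * m \<and> gaps_le d A \<and> m \<le> card (A \<inter> N)"
proof -
  have "finite N" using assms(4) finite_subset by blast
  obtain p where p: "\<And>i j. i < j \<Longrightarrow> j < card N \<Longrightarrow> p i < p j" "p ` {..<card N} = N"
    using obtain_strict_enumeration[OF \<open>finite N\<close>] by metis
  have "p i \<in> {1..n}" if "i < card N" for i using p(2) that assms(4) by blast
  then obtain C j where C: "gaps_le d C" "C \<subseteq> {1..n}" "card C \<le> 2 * m" "j + m \<le> card N"
    "(\<lambda>i. p (j + i)) ` {..m - 1} \<subseteq> C"
    using exists_short_block_through_points[OF assms(1,2,6,5)] p(1) by blast
  let ?P = "(\<lambda>i. p (j + i)) ` {..m - 1}"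
  have "?P \<subseteq> N" using p(2) C(4) assms(2) by force
  have "inj_on (\<lambda>i. p (j + i)) {..m - 1}"
  proof (rule inj_onI, rule ccontr)
    fix a b assume "a \<in> {..m - 1}" "b \<in> {..m - 1}" "p (j + a) = p (j + b)" "a \<noteq> b"
    moreover from this have "j + a < card N" "j + b < card N" using C(4) assms(2) by auto
    ultimately show False using p(1)[of "j + a" "j + b"] p(1)[of "j + b" "j + a"]
      by (cases a b rule: linorder_cases) auto
  qed
  then have "card ?P = m" using assms(2) by (simp add: card_image)
  have "C \<noteq> {}" using C(5) by auto
  then obtain A where A: "C \<subseteq> A" "A \<subseteq> {1..n}" "card A = 2 * m" "gaps_le d A"
    using gaps_le_superset_card[OF C(1) assms(1) C(2) _ C(3) assms(3)] by blast
  have "?P \<subseteq> A \<inter> N" using A(1) C(5) \<open>?P \<subseteq> N\<close> by blast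
  then have "card ?P \<le> card (A \<inter> N)" using A(2) finite_subset by (intro card_mono) auto
  then show ?thesis using A \<open>card ?P = m\<close> by auto
qed

lemma zero_sum_block_if_start_positive:
  fixes g :: "nat \<Rightarrow> int"
  assumes "d \<ge> 1" "m \<ge> 1" "2 * m \<le> n"
    and pm: "\<forall>i\<in>{1..n}. g i = 1 \<or> g i = -1"
    and start: "0 < sum g {1..2 * m}"
    and "n \<le> card {i\<in>{1..n}. g i = -1} * (d + 1)"
    and "(m + 1) div 2 * (m - 1) < card {i\<in>{1..n}. g i = -1}"
  shows "\<exists>A. A \<subseteq> {1..n} \<and> card A = 2 * m \<and> gaps_le d A \<and> sum g A = 0"
proof (rule ccontr)
  assume "\<not> ?thesis"
  then have pos: "0 < sum g A" if "A \<subseteq> {1..n}" "card A = 2 * m" "gaps_le d A" for A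
    using sum_pos_if_no_zero_sum[OF assms(1) _ pm _ start] that by auto
  obtain A where A: "A \<subseteq> {1..n}" "card A = 2 * m" "gaps_le d A"
    "m \<le> card (A \<inter> {i\<in>{1..n}. g i = -1})"
    using exists_block_dense_in[OF assms(1-3) _ assms(6,7)] by blast
  have "A \<inter> {i\<in>{1..n}. g i = -1} = {x\<in>A. g x = -1}" using A(1) by auto
  moreover have "sum g A = int (card A) - 2 * int (card {x\<in>A. g x = -1})"
    using sum_plus_minus_one[of A g] A(1) pm finite_subset[OF A(1)] by auto
  ultimately have "sum g A \<le> 0" using A(2,4) by simp
  then show False using pos[OF A(1-3)] by simp
qed

lemma card_minus_ones_bound:
  fixes g :: "'a \<Rightarrow> int"
  assumes "finite S" "\<forall>x\<in>S. g x = 1 \<or> g x = -1"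
    and "real_of_int \<bar>sum g S\<bar> \<le> (real d - 1) / (real d + 1) * real (card S)"
  shows "card S \<le> card {x\<in>S. g x = -1} * (d + 1)"
proof -
  let ?N = "card {x\<in>S. g x = -1}"
  have "real (card S) - 2 * real ?N \<le> (real d - 1) / (real d + 1) * real (card S)"
    using sum_plus_minus_one[OF assms(1,2)] assms(3) by linarith
  then have "(real (card S) - 2 * real ?N) * (real d + 1) \<le> (real d - 1) * real (card S)"
    by (simp add: field_simps)
  then have "real (card S) \<le> real (?N * (d + 1))" by (simp add: algebra_simps)
  then show ?thesis by (simp only: of_nat_le_iff)
qed

lemma exists_zero_sum_block:
  fixes f :: "nat \<Rightarrow> int"
  assumes "d \<ge> 1" "m \<ge> 1" "2 * m \<le> n"
    and pm: "\<forall>i\<in>{1..n}. f i = 1 \<or> f i = -1"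
    and balanced: "real_of_int \<bar>sum f {1..n}\<bar> \<le> (real d - 1) / (real d + 1) * real n"
    and long: "(m + 1) div 2 * (m - 1) * (d + 1) < n"
  shows "\<exists>A. A \<subseteq> {1..n} \<and> card A = 2 * m \<and> gaps_le d A \<and> sum f A = 0"
proof -
  have dense: "n \<le> card {i\<in>{1..n}. g i = -1} * (d + 1)"
    and many: "(m + 1) div 2 * (m - 1) < card {i\<in>{1..n}. g i = -1}"
    if "\<forall>i\<in>{1..n}. g i = 1 \<or> g i = -1" "\<bar>sum g {1..n}\<bar> = \<bar>sum f {1..n}\<bar>" for g
  proof -
    have "real_of_int \<bar>sum g {1..n}\<bar> \<le> (real d - 1) / (real d + 1) * real (card {1..n})"
      using balanced by (simp only: that(2) card_atLeastAtMost diff_Suc_1)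
    from card_minus_ones_bound[OF finite_atLeastAtMost that(1) this]
    show dense: "n \<le> card {i\<in>{1..n}. g i = -1} * (d + 1)" by simp
    show "(m + 1) div 2 * (m - 1) < card {i\<in>{1..n}. g i = -1}"
      using less_le_trans[OF long dense] mult_less_cancel2 by blast
  qed
  let ?g = "\<lambda>i. - f i"
  have pm': "\<forall>i\<in>{1..n}. ?g i = 1 \<or> ?g i = -1" using pm by auto
  have abs': "\<bar>sum ?g {1..n}\<bar> = \<bar>sum f {1..n}\<bar>" by (simp add: sum_negf)
  consider "sum f {1..2 * m} = 0" | "0 < sum f {1..2 * m}" | "0 < sum ?g {1..2 * m}"
    by (fastforce simp: sum_negf)
  then show ?thesis
  proof cases
    case 1
    then show ?thesis using assms(1,3) gaps_le_atLeastAtMost by (intro exI[of _ "{1..2 * m}"]) auto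
  next
    case 2
    then show ?thesis
      using zero_sum_block_if_start_positive[OF assms(1-3) pm _ dense many] pm by blast
  next
    case 3
    from zero_sum_block_if_start_positive[OF assms(1-3) pm' 3 dense[OF pm' abs'] many[OF pm' abs']]
    show ?thesis by (auto simp: sum_negf)
  qed
qed

lemma threshold_eq:
  fixes k m s :: nat
  assumes "k = 2 * m" "m \<ge> 1" "s = ((k - 2) div 2) mod 2"
  shows "real k ^ 2 - 2 * real s * real k + 4 * real s - 4 = 8 * real ((m + 1) div 2 * (m - 1))"
proof (cases "even m")
  case True
  then obtain r' where "m = 2 * r'" by (rule evenE)
  then obtain r where "m = 2 * r + 2" using assms(2) by (cases r') auto
  then have "k = 4 * r + 4" "s = 1" "(m + 1) div 2 * (m - 1) = (r + 1) * (2 * r + 1)"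
    using assms by auto
  then show ?thesis by (simp add: algebra_simps power2_eq_square)
next
  case False
  then obtain q where "m = 2 * q + 1" by (rule oddE)
  then have "k = 4 * q + 2" "s = 0" "(m + 1) div 2 * (m - 1) = (q + 1) * (2 * q)"
    using assms by auto
  then show ?thesis by (simp add: algebra_simps power2_eq_square)
qed

theorem theorem3p1:
  fixes k d n s :: nat and f :: "nat \<Rightarrow> int"
  assumes "k > 0" "d > 0" "n > 0"
    and "even k" and "d \<ge> 2"
    and "s = ((k - 2) div 2) mod 2"
    and "n \<ge> k"
    and "real n \<ge> (real d + 1) / 8 * (real k ^ 2 - 2 * real s * real k + 4 * real s - 4) + 1"
    and "\<forall>i\<in>{1..n}. f i = -1 \<or> f i = 1"
    and "\<bar>(\<Sum>i\<in>{1..n}. f i)\<bar> \<le> int n - int k"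
    and "real_of_int \<bar>\<Sum>i\<in>{1..n}. f i\<bar> \<le> (real d - 1) / (real d + 1) * real n"
  shows "\<exists>A. dk_block d k n A \<and> (\<Sum>i\<in>A. f i) = 0"
proof -
  define m where "m = k div 2"
  have "k = 2 * m" "m \<ge> 1" unfolding m_def using assms(1,4) by auto
  define c where "c = (m + 1) div 2 * (m - 1)"
  have "real n \<ge> (real d + 1) / 8 * (8 * real c) + 1"
    using assms(8)[unfolded threshold_eq[OF \<open>k = 2 * m\<close> \<open>m \<ge> 1\<close> assms(6)]] unfolding c_def .
  then have "real (c * (d + 1)) < real n" by (simp add: field_simps)
  then have long: "(m + 1) div 2 * (m - 1) * (d + 1) < n" unfolding c_def by (simp only: of_nat_less_iff)
  have "\<forall>i\<in>{1..n}. f i = 1 \<or> f i = -1" using assms(9) by auto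
  then obtain A where "A \<subseteq> {1..n}" "card A = k" "gaps_le d A" "sum f A = 0"
    using exists_zero_sum_block[OF _ \<open>m \<ge> 1\<close> _ _ assms(11) long] assms(2,7) \<open>k = 2 * m\<close> by auto
  then show ?thesis using gaps_le_imp_dk_block by blast
qed

end
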